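(* Let $a>0$ and let $X_1,X_2,\dots$ be i.i.d. with $\mathbf{E}X_1=-a$, and assume one of the following: (a) $\overline F(x)=x^{-\alpha}L(x)$ with $\alpha>1$ and $L$ slowly varying; or (b) $\overline F(x)\sim x^{-\varkappa}e^{-g(x)}$, where $g$ is a nondecreasing continuously differentiable function with $g(x)/x^\beta$ nonincreasing for some $\beta\in(0,1/2)$, and $\mathbf{E}|X_1|^\varkappa<\infty$ with $\varkappa>1/(1-\beta)$. Then for every fixed integer $k\ge1$, \[ \sup_{v>y}\left|\frac{\mathbf{P}(S_k>v,\ \sigma_y=k)}{\overline F(v)}-\mathbf{P}(\tau>k-1)\right|\to0\qquad\text{as } y\to\infty. \]
   Context: $S_0=0$, $S_n=X_1+\dots+X_n$, $\overline F(x)=\mathbf{P}(X_1>x)$, $\tau=\min\{n\ge1:S_n\le0\}$, and for $y>0$, $\sigma_y=\inf\{n<\tau: S_n>y\}$ (with $\inf\emptyset=\infty$). *)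

theory Defs
  imports "HOL-Probability.Probability" "HOL-Library.Landau_Symbols"
begin

text \<open>Random walk with increments X 1, X 2, ... (index 0 unused); S_0 = 0.\<close>
definition rw_S :: "(nat \<Rightarrow> 'a \<Rightarrow> real) \<Rightarrow> nat \<Rightarrow> 'a \<Rightarrow> real" where
  "rw_S X n \<omega> = (\<Sum>i\<in>{1..n}. X i \<omega>)"

definition rw_tau :: "(nat \<Rightarrow> 'a \<Rightarrow> real) \<Rightarrow> 'a \<Rightarrow> enat" where
  "rw_tau X \<omega> = (if \<exists>n\<ge>1. rw_S X n \<omega> \<le> 0
      then enat (LEAST n. n \<ge> 1 \<and> rw_S X n \<omega> \<le> 0) else \<infinity>)"

definition rw_sigma :: "(nat \<Rightarrow> 'a \<Rightarrow> real) \<Rightarrow> real \<Rightarrow> 'a \<Rightarrow> enat" where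
  "rw_sigma X y \<omega> = (if \<exists>n. enat n < rw_tau X \<omega> \<and> rw_S X n \<omega> > y
      then enat (LEAST n. enat n < rw_tau X \<omega> \<and> rw_S X n \<omega> > y) else \<infinity>)"

definition slowly_varying :: "(real \<Rightarrow> real) \<Rightarrow> bool" where
  "slowly_varying L \<longleftrightarrow> (\<forall>\<^sub>F x in at_top. L x > 0) \<and>
     (\<forall>c>0. ((\<lambda>x. L (c * x) / L x) \<longlongrightarrow> 1) at_top)"

end

theory Submission
  imports Defs "HOL-Real_Asymp.Real_Asymp"
begin

text \<open>For \<open>0 < y < v\<close> the event \<open>S\<^sub>k > v, \<sigma>\<^sub>y = k\<close> says that \<open>S\<^sub>1, \<dots>, S\<^sub>k\<^sub>-\<^sub>1\<close>
  stay in \<open>(0, y]\<close> and that \<open>S\<^sub>k\<close> then exceeds \<open>v\<close>. By independence, the jump \<open>X\<^sub>k > v\<close>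
  alone gives the lower bound \<open>P(S\<^sub>1, \<dots>, S\<^sub>k\<^sub>-\<^sub>1 \<in> (0, y]) F(v)\<close>, where \<open>F\<close> is the tail
  of \<open>X\<^sub>1\<close>. For the upper bound either \<open>X\<^sub>k > v - K\<close>, which costs the same up to a factor
  \<open>F(v - K) / F(v) \<rightarrow> 1\<close>, or \<open>S\<^sub>k\<^sub>-\<^sub>1 \<in> (K, v]\<close> and \<open>S\<^sub>k > v\<close>. By the principle of a single
  big jump, \<open>P(S\<^sub>n > v) \<sim> n F(v)\<close>, and this forces the second alternative to have
  probability \<open>o(F(v))\<close> as \<open>K \<rightarrow> \<infinity>\<close>. Finally
  \<open>P(S\<^sub>1, \<dots>, S\<^sub>k\<^sub>-\<^sub>1 \<in> (0, y]) \<rightarrow> P(\<tau> > k - 1)\<close> as \<open>y \<rightarrow> \<infinity>\<close>.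

  The single big jump principle holds for every tail that is insensitive to shifts by some
  \<open>h(v) \<rightarrow> \<infinity>\<close> and for which two summands both exceeding \<open>h(v)\<close> contribute \<open>o(F(v))\<close>;
  regularly varying tails satisfy this with \<open>h(v) = \<delta> v\<close>, Weibull-type tails with
  \<open>h(v) = v\<^sup>(\<^sup>1\<^sup>-\<^sup>\<beta>\<^sup>)\<^sup>/\<^sup>2\<close>, after cutting the two-jump region into dyadic pieces.
  For fixed \<open>k\<close> only the tail of \<open>X\<^sub>1\<close> matters.\<close>

lemma eventually_at_top_add_const:
  fixes c :: real
  assumes "eventually P at_top"
  shows "eventually (\<lambda>v. P (v + c)) at_top"
proof -
  obtain N where "\<And>t. t \<ge> N \<Longrightarrow> P t"
    using assms by (auto simp: eventually_at_top_linorder)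
  then show ?thesis
    unfolding eventually_at_top_linorder by (intro exI[of _ "N - c"]) auto
qed

lemma eventually_le_of_ratio_less:
  assumes "((\<lambda>v. f v / g v) \<longlongrightarrow> c) at_top" "c < b" "\<forall>\<^sub>F v in at_top. g v > (0::real)"
  shows "\<forall>\<^sub>F v in at_top. f v \<le> b * g v"
  using order_tendstoD(2)[OF assms(1,2)] assms(3)
  by eventually_elim (simp add: divide_less_eq)

lemma exists_small_shrink:
  fixes \<alpha> \<epsilon> :: real
  assumes "\<epsilon> > 0"
  obtains \<delta> where "0 < \<delta>" "\<delta> < 1 / 2" "(1 - \<delta>) powr (-\<alpha>) < 1 + \<epsilon>"
proof -
  have "((\<lambda>d. (1 - d) powr (-\<alpha>)) \<longlongrightarrow> (1 - 0) powr (-\<alpha>)) (at_right 0)"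
    by (intro tendsto_intros) auto
  then have "\<forall>\<^sub>F d in at_right 0. (1 - d) powr (-\<alpha>) < 1 + \<epsilon>"
    by (rule order_tendstoD(2)) (use assms in simp)
  moreover have "\<forall>\<^sub>F d in at_right 0. d < (1 / 2 :: real)"
    by (rule order_tendstoD(2)[OF tendsto_ident_at]) simp
  ultimately have "\<forall>\<^sub>F d in at_right 0. 0 < d \<and> d < 1 / 2 \<and> (1 - d) powr (-\<alpha>) < 1 + \<epsilon>"
    using eventually_at_right_less[of 0] by eventually_elim auto
  then show thesis
    using eventually_happens'[OF trivial_limit_at_right_real] that by blast
qed

lemma exists_small_perturbation:
  fixes c a :: real
  assumes "c + 1 < a"
  obtains e where "0 < e" "(1 + e) + (c + e) * (1 + e) + (c + e) * e < a"
proof -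
  have "((\<lambda>e. (1 + e) + (c + e) * (1 + e) + (c + e) * e) \<longlongrightarrow> (1 + 0) + (c + 0) * (1 + 0) + (c + 0) * 0)
          (at_right 0)"
    by (intro tendsto_intros)
  then have "\<forall>\<^sub>F e in at_right 0. (1 + e) + (c + e) * (1 + e) + (c + e) * e < a"
    by (rule order_tendstoD(2)) (use assms in simp)
  then have "\<forall>\<^sub>F e in at_right 0. 0 < e \<and> (1 + e) + (c + e) * (1 + e) + (c + e) * e < a"
    using eventually_at_right_less[of 0] by eventually_elim auto
  then show thesis
    using eventually_happens'[OF trivial_limit_at_right_real] that by blast
qed

lemma sum_Un_image_le:
  fixes f :: "'b \<Rightarrow> real"
  assumes "finite I" "\<And>x. 0 \<le> f x"
  shows "sum f (a ` I \<union> b ` I) \<le> (\<Sum>i\<in>I. f (a i)) + (\<Sum>i\<in>I. f (b i))"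
proof -
  have "sum f (a ` I \<union> b ` I) \<le> sum f (a ` I) + sum f (b ` I)"
    using assms by (simp add: sum_Un sum_nonneg)
  also have "\<dots> \<le> (\<Sum>i\<in>I. f (a i)) + (\<Sum>i\<in>I. f (b i))"
    using assms sum_image_le[of I f a] sum_image_le[of I f b] by (simp add: o_def add_mono)
  finally show ?thesis .
qed

lemma powr_neg_divide_power_2:
  fixes v \<kappa> :: real
  shows "(v / 2 ^ m) powr (-\<kappa>) = v powr (-\<kappa>) * (2 powr \<kappa>) ^ m"
proof -
  have "((2::real) ^ m) powr (-\<kappa>) = (2 powr (real m)) powr (-\<kappa>)"
    by (simp add: powr_realpow)
  also have "\<dots> = inverse ((2 powr \<kappa>) ^ m)"
    by (simp add: powr_powr powr_power powr_minus[symmetric] mult.commute)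
  finally have "((2::real) ^ m) powr (-\<kappa>) = inverse ((2 powr \<kappa>) ^ m)" .
  moreover have "(v / 2 ^ m) powr (-\<kappa>) = v powr (-\<kappa>) / ((2::real) ^ m) powr (-\<kappa>)"
    by (rule powr_divide)
  ultimately show ?thesis
    by (simp add: divide_inverse)
qed

lemma sum_dyadic_powr_le:
  fixes v \<kappa> :: real
  assumes "\<kappa> > 0"
  shows "(\<Sum>j<N. (v / 2 ^ (j + 1)) powr (-\<kappa>)) \<le> (v / 2 ^ N) powr (-\<kappa>) * (2 powr \<kappa> / (2 powr \<kappa> - 1))"
proof -
  define r :: real where "r = 2 powr \<kappa>"
  have r: "r > 1"
    using assms by (simp add: r_def)
  have "(\<Sum>j<N. r ^ (j + 1)) \<le> r ^ N * (r / (r - 1))"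
  proof (induction N)
    case (Suc N)
    then have "(\<Sum>j<Suc N. r ^ (j + 1)) \<le> r ^ N * (r / (r - 1)) + r ^ (N + 1)"
      by simp
    also have "\<dots> = r ^ Suc N * (r / (r - 1))"
      using r by (simp add: field_simps)
    finally show ?case .
  qed (use r in simp)
  then have "v powr (-\<kappa>) * (\<Sum>j<N. r ^ (j + 1)) \<le> v powr (-\<kappa>) * (r ^ N * (r / (r - 1)))"
    by (rule mult_left_mono) simp
  then show ?thesis
    unfolding powr_neg_divide_power_2 r_def sum_distrib_left by (simp only: mult.assoc)
qed

lemma exists_dyadic_interval:
  fixes v w :: real
  assumes "0 < w" "w \<le> v / 2"
  shows "\<exists>j. v / 2 ^ (j + 2) < w \<and> w \<le> v / 2 ^ (j + 1)"
proof -
  obtain n where "v / w < 2 ^ n"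
    using real_arch_pow[of 2 "v / w"] by auto
  then have "v / 2 ^ (n + 2) < w"
    using assms by (auto simp: divide_less_eq power_add mult.commute intro: order.strict_trans1)
  then have least: "v / 2 ^ ((LEAST j. v / 2 ^ (j + 2) < w) + 2) < w"
    by (rule LeastI)
  have "w \<le> v / 2 ^ ((LEAST j. v / 2 ^ (j + 2) < w) + 1)"
  proof (cases "LEAST j. v / 2 ^ (j + 2) < w")
    case (Suc i)
    then have "\<not> v / 2 ^ (i + 2) < w"
      by (metis lessI not_less_Least)
    with Suc show ?thesis
      by simp
  qed (use assms in simp)
  with least show ?thesis
    by blast
qed

lemma dyadic_index_exists:
  fixes h v :: real
  assumes "0 < h"
  obtains N where "\<And>j. j < N \<Longrightarrow> h < v / 2 ^ (j + 1)" "v / 2 ^ (N + 1) \<le> h"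
proof -
  obtain n where "v / h < 2 ^ n"
    using real_arch_pow[of 2 "v / h"] by auto
  then have "v < h * 2 ^ n"
    using assms by (simp add: divide_less_eq mult.commute)
  moreover have "h * 2 ^ n \<le> h * 2 ^ (n + 1)"
    using assms by (intro mult_left_mono power_increasing) auto
  ultimately have "v < h * 2 ^ (n + 1)"
    by linarith
  then have "v / 2 ^ (n + 1) \<le> h"
    by (simp add: divide_le_eq)
  then show thesis
    using LeastI[of "\<lambda>j. v / 2 ^ (j + 1) \<le> h" n] not_less_Least[of _ "\<lambda>j. v / 2 ^ (j + 1) \<le> h"]
    by (intro that[of "LEAST j. v / 2 ^ (j + 1) \<le> h"]) (auto simp: not_le)
qed

lemma dyadic_cover:
  fixes h v w z :: real
  assumes "0 < h" "h < v / 2" "h < w" "h < z" "v < w + z"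
    and N: "\<And>j. j < N \<Longrightarrow> h < v / 2 ^ (j + 1)" "v / 2 ^ (N + 1) \<le> h"
  shows "\<exists>j<N. (v / 2 ^ (j + 2) < w \<and> v - v / 2 ^ (j + 1) < z)
             \<or> (v / 2 ^ (j + 2) < z \<and> v - v / 2 ^ (j + 1) < w)"
proof -
  have piece: "\<exists>j<N. v / 2 ^ (j + 2) < a \<and> v - v / 2 ^ (j + 1) < b"
    if a: "h < a" "a \<le> v / 2" "v < a + b" for a b
  proof -
    obtain j where j: "v / 2 ^ (j + 2) < a" "a \<le> v / 2 ^ (j + 1)"
      using exists_dyadic_interval[of a v] a assms(1) by auto
    have "j < N"
    proof (rule ccontr)
      assume "\<not> j < N"
      then have "v / 2 ^ (j + 1) \<le> v / 2 ^ (N + 1)"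
        using assms(1,2) by (intro divide_left_mono power_increasing) auto
      with j(2) N(2) \<open>h < a\<close> show False
        by linarith
    qed
    with j a show ?thesis
      by auto
  qed
  consider "w \<le> v / 2" | "z \<le> v / 2" | "v / 2 < w" "v / 2 < z"
    by linarith
  then show ?thesis
  proof cases
    case 1
    then show ?thesis
      using piece[of w z] assms by auto
  next
    case 2
    then show ?thesis
      using piece[of z w] assms by (auto simp: add.commute)
  next
    case 3
    have "0 < N"
      using N(2) assms(2) by (cases N) auto
    with 3 assms(1,2) show ?thesis
      by (intro exI[of _ 0]) auto
  qed
qed

lemma (in prob_space) prob_gt_eq_1_minus_cdf:
  fixes Y :: "'a \<Rightarrow> real"
  assumes "Y \<in> borel_measurable M"
  shows "prob {\<omega>\<in>space M. Y \<omega> > t} = 1 - cdf (distr M borel Y) t"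
proof -
  have "cdf (distr M borel Y) t = prob {\<omega>\<in>space M. Y \<omega> \<le> t}"
    unfolding cdf_def using assms by (subst measure_distr) (auto simp: vimage_def Int_def conj_commute)
  moreover have "prob {\<omega>\<in>space M. \<not> Y \<omega> \<le> t} = 1 - prob {\<omega>\<in>space M. Y \<omega> \<le> t}"
    using assms by (intro prob_neg) measurable
  ultimately show ?thesis by (simp add: not_le)
qed

lemma (in prob_space) prob_gt_tendsto_0:
  fixes Y :: "'a \<Rightarrow> real"
  assumes "Y \<in> borel_measurable M"
  shows "((\<lambda>t. prob {\<omega>\<in>space M. Y \<omega> > t}) \<longlongrightarrow> 0) at_top"
  using real_distribution.cdf_lim_at_top_prob[OF real_distribution_distr[OF assms]]
  by (auto simp: prob_gt_eq_1_minus_cdf[OF assms] intro: tendsto_eq_intros)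

lemma (in prob_space) prob_gt_tendsto_1:
  fixes Y :: "'a \<Rightarrow> real"
  assumes "Y \<in> borel_measurable M"
  shows "((\<lambda>t. prob {\<omega>\<in>space M. Y \<omega> > t}) \<longlongrightarrow> 1) at_bot"
  using finite_borel_measure.cdf_lim_at_bot[OF real_distribution.finite_borel_measure_M[OF real_distribution_distr[OF assms]]]
  by (auto simp: prob_gt_eq_1_minus_cdf[OF assms] intro: tendsto_eq_intros)

section \<open>Tails dominated by one big jump\<close>

text \<open>A finite set \<open>Q\<close> of points \<open>(p, q)\<close> stands for the union of the quadrants
  \<open>{p<..} \<times> {q<..}\<close>, which must cover the region where two summands both exceed \<open>h v\<close>
  while their sum exceeds \<open>v\<close>.\<close>

definition two_big_jumps_negligible :: "(real \<Rightarrow> real) \<Rightarrow> (real \<Rightarrow> real) \<Rightarrow> bool" where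
  "two_big_jumps_negligible T h \<longleftrightarrow>
     (\<forall>\<eta>>0. \<forall>t0. \<forall>\<^sub>F v in at_top. \<exists>Q. finite Q \<and> (\<forall>p\<in>Q. t0 \<le> fst p \<and> t0 \<le> snd p) \<and>
        (\<forall>w z. h v < w \<and> h v < z \<and> v < w + z \<longrightarrow> (\<exists>p\<in>Q. fst p < w \<and> snd p < z)) \<and>
        (\<Sum>p\<in>Q. T (fst p) * T (snd p)) \<le> \<eta> * T v)"

definition one_big_jump_tail :: "(real \<Rightarrow> real) \<Rightarrow> bool" where
  "one_big_jump_tail T \<longleftrightarrow> (\<forall>\<^sub>F v in at_top. T v > 0) \<and>
     (\<forall>\<epsilon>>0. \<exists>h. filterlim h at_top at_top \<and> (\<forall>\<^sub>F v in at_top. h v \<le> v / 2) \<and>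
        (\<forall>\<^sub>F v in at_top. T (v - h v) \<le> (1 + \<epsilon>) * T v) \<and> two_big_jumps_negligible T h)"

lemma one_big_jump_tail_pos: "one_big_jump_tail T \<Longrightarrow> \<forall>\<^sub>F v in at_top. T v > 0"
  unfolding one_big_jump_tail_def by blast

lemma one_big_jump_tail_shift_le:
  assumes T: "one_big_jump_tail T" "antimono T" and "\<epsilon> > 0"
  shows "\<forall>\<^sub>F v in at_top. T (v - c) \<le> (1 + \<epsilon>) * T v"
proof -
  obtain h where h: "filterlim h at_top at_top" "\<forall>\<^sub>F v in at_top. T (v - h v) \<le> (1 + \<epsilon>) * T v"
    using T(1) \<open>\<epsilon> > 0\<close> unfolding one_big_jump_tail_def by blast
  from h(2) filterlim_at_top[THEN iffD1, OF h(1), rule_format, of c]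
  show ?thesis
    by eventually_elim (use T(2) in \<open>auto dest: antimonoD[of T "v - h v" "v - c" for v]\<close>)
qed

lemma one_big_jump_tail_shift_ratio:
  assumes T: "one_big_jump_tail T" "antimono T"
  shows "((\<lambda>v. T (v + K) / T v) \<longlongrightarrow> 1) at_top"
proof (rule tendstoI)
  fix e :: real assume "e > 0"
  then have e: "e / 2 > 0" by simp
  note shift = one_big_jump_tail_shift_le[OF T e, of "\<bar>K\<bar>"]
  show "\<forall>\<^sub>F v in at_top. dist (T (v + K) / T v) 1 < e"
    using shift eventually_at_top_add_const[OF shift, of "\<bar>K\<bar>"] one_big_jump_tail_pos[OF T(1)]
  proof eventually_elim
    case (elim v)
    have "T (v + K) \<le> T (v - \<bar>K\<bar>)" "T (v + \<bar>K\<bar>) \<le> T (v + K)"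
      by (auto intro: antimonoD[OF T(2)])
    with elim \<open>e > 0\<close> have "T (v + K) \<le> (1 + e / 2) * T v" "T v \<le> (1 + e / 2) * T (v + K)"
      by (auto intro: order_trans mult_left_mono)
    with elim(3) have "T (v + K) / T v \<le> 1 + e / 2" "1 / (1 + e / 2) \<le> T (v + K) / T v"
      using \<open>e > 0\<close> by (auto simp: field_simps)
    moreover have "1 - e < 1 / (1 + e / 2)"
      using \<open>e > 0\<close> by (simp add: field_simps add_pos_pos)
    ultimately show ?case
      using \<open>e > 0\<close> by (auto simp: dist_real_def abs_less_iff)
  qed
qed

section \<open>Passage times of a random walk\<close>

lemma rw_S_0 [simp]: "rw_S X 0 \<omega> = 0"
  by (simp add: rw_S_def)

lemma rw_S_Suc: "rw_S X (Suc n) \<omega> = rw_S X n \<omega> + X (Suc n) \<omega>"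
  by (simp add: rw_S_def add.commute)

lemma enat_Least_eq_iff:
  "(if \<exists>n. P n then enat (LEAST n. P n) else \<infinity>) = enat k \<longleftrightarrow> P k \<and> (\<forall>j<k. \<not> P j)"
proof
  assume "(if \<exists>n. P n then enat (LEAST n. P n) else \<infinity>) = enat k"
  then have "\<exists>n. P n" "(LEAST n. P n) = k"
    by (auto split: if_splits)
  then show "P k \<and> (\<forall>j<k. \<not> P j)"
    using LeastI_ex not_less_Least by metis
next
  assume "P k \<and> (\<forall>j<k. \<not> P j)"
  then have "(LEAST n. P n) = k"
    by (intro Least_equality) (auto simp: not_less[symmetric])
  with \<open>P k \<and> (\<forall>j<k. \<not> P j)\<close> show "(if \<exists>n. P n then enat (LEAST n. P n) else \<infinity>) = enat k"
    by auto
qed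

lemma rw_tau_gt_iff: "enat m < rw_tau X \<omega> \<longleftrightarrow> (\<forall>j\<in>{1..m}. rw_S X j \<omega> > 0)"
proof (cases "\<exists>n\<ge>1. rw_S X n \<omega> \<le> 0")
  case True
  define L where "L = (LEAST n. n \<ge> 1 \<and> rw_S X n \<omega> \<le> 0)"
  have L: "L \<ge> 1" "rw_S X L \<omega> \<le> 0" "\<And>j. j \<ge> 1 \<Longrightarrow> rw_S X j \<omega> \<le> 0 \<Longrightarrow> L \<le> j"
    using LeastI_ex[OF True] unfolding L_def by (auto intro: Least_le)
  have "m < L \<longleftrightarrow> (\<forall>j\<in>{1..m}. rw_S X j \<omega> > 0)"
  proof
    show "m < L \<Longrightarrow> \<forall>j\<in>{1..m}. rw_S X j \<omega> > 0"
      using L(3) by (meson atLeastAtMost_iff not_le order.strict_trans1)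
    show "\<forall>j\<in>{1..m}. rw_S X j \<omega> > 0 \<Longrightarrow> m < L"
      using L(1,2) by (meson atLeastAtMost_iff not_le)
  qed
  with True show ?thesis
    unfolding rw_tau_def L_def[symmetric] by simp
qed (auto simp: rw_tau_def)

definition rw_confined :: "(nat \<Rightarrow> 'a \<Rightarrow> real) \<Rightarrow> nat \<Rightarrow> real \<Rightarrow> 'a \<Rightarrow> bool" where
  "rw_confined X n y \<omega> \<longleftrightarrow> (\<forall>j\<in>{1..n}. 0 < rw_S X j \<omega> \<and> rw_S X j \<omega> \<le> y)"

lemma rw_confined_rw_S:
  assumes "rw_confined X n y \<omega>" "0 \<le> y"
  shows "0 \<le> rw_S X n \<omega> \<and> rw_S X n \<omega> \<le> y"
  using assms unfolding rw_confined_def by (cases "n = 0") (auto dest: bspec[of _ _ n])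

lemma rw_confined_imp_tau_gt: "rw_confined X n y \<omega> \<Longrightarrow> enat n < rw_tau X \<omega>"
  by (simp add: rw_confined_def rw_tau_gt_iff)

lemma rw_sigma_eq_Suc_iff:
  assumes "0 < y" "y < v"
  shows "rw_S X (Suc n) \<omega> > v \<and> rw_sigma X y \<omega> = enat (Suc n)
     \<longleftrightarrow> rw_confined X n y \<omega> \<and> rw_S X (Suc n) \<omega> > v"
proof -
  define P where "P j \<longleftrightarrow> (\<forall>i\<in>{1..j}. rw_S X i \<omega> > 0) \<and> rw_S X j \<omega> > y" for j
  have sigma: "rw_sigma X y \<omega> = enat (Suc n) \<longleftrightarrow> P (Suc n) \<and> (\<forall>j<Suc n. \<not> P j)"
    unfolding rw_sigma_def rw_tau_gt_iff P_def[abs_def] by (rule enat_Least_eq_iff)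
  show ?thesis
  proof
    assume "rw_S X (Suc n) \<omega> > v \<and> rw_sigma X y \<omega> = enat (Suc n)"
    then have "P (Suc n)" "\<And>j. j \<le> n \<Longrightarrow> \<not> P j" "rw_S X (Suc n) \<omega> > v"
      by (auto simp: sigma)
    then show "rw_confined X n y \<omega> \<and> rw_S X (Suc n) \<omega> > v"
      unfolding rw_confined_def P_def by (force simp: not_less)
  next
    assume *: "rw_confined X n y \<omega> \<and> rw_S X (Suc n) \<omega> > v"
    then have "P (Suc n)"
      using assms by (auto simp: P_def rw_confined_def le_Suc_eq)
    moreover have "\<not> P j" if "j < Suc n" for j
      using * that assms unfolding P_def rw_confined_def
      by (cases "j = 0") (auto dest: bspec[of _ _ j])
    ultimately show "rw_S X (Suc n) \<omega> > v \<and> rw_sigma X y \<omega> = enat (Suc n)"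
      using * by (simp add: sigma)
  qed
qed

locale iid_walk = prob_space +
  fixes X :: "nat \<Rightarrow> 'a \<Rightarrow> real"
  assumes X_measurable: "\<And>i. i \<ge> 1 \<Longrightarrow> X i \<in> borel_measurable M"
    and X_indep: "indep_vars (\<lambda>_. borel) X {1..}"
    and X_distr: "\<And>i. i \<ge> 1 \<Longrightarrow> distr M borel (X i) = distr M borel (X 1)"
begin

lemma X_Suc_measurable [measurable]: "X (Suc n) \<in> borel_measurable M"
  using X_measurable by auto

lemma X_one_measurable [measurable]: "X 1 \<in> borel_measurable M"
  using X_measurable by auto

lemma rw_S_measurable [measurable]: "rw_S X n \<in> borel_measurable M"
  unfolding rw_S_def[abs_def] using X_measurable by (intro borel_measurable_sum) auto

definition Fbar :: "real \<Rightarrow> real" where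
  "Fbar t = prob {\<omega>\<in>space M. X 1 \<omega> > t}"

lemma Fbar_nonneg: "0 \<le> Fbar t"
  by (simp add: Fbar_def)

lemma Fbar_antimono: "antimono Fbar"
  unfolding Fbar_def by (intro antimonoI finite_measure_mono) auto

lemma Fbar_tendsto_0: "(Fbar \<longlongrightarrow> 0) at_top"
  unfolding Fbar_def[abs_def] by (rule prob_gt_tendsto_0) measurable

lemma Fbar_at_bot: "(Fbar \<longlongrightarrow> 1) at_bot"
  unfolding Fbar_def[abs_def] by (rule prob_gt_tendsto_1) measurable

lemma prob_X_Suc_in: "B \<in> sets borel \<Longrightarrow>
    prob {\<omega>\<in>space M. X (Suc n) \<omega> \<in> B} = prob {\<omega>\<in>space M. X 1 \<omega> \<in> B}"
  using arg_cong[OF X_distr[of "Suc n"], of "\<lambda>D. measure D B"]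
  by (simp add: measure_distr vimage_def Int_def conj_commute)

lemma prob_X_Suc_gt: "prob {\<omega>\<in>space M. X (Suc n) \<omega> > t} = Fbar t"
  using prob_X_Suc_in[of "{t<..}" n] by (simp add: Fbar_def)

lemma prob_block_and_increment:
  fixes f :: "(nat \<Rightarrow> real) \<Rightarrow> real"
  assumes f: "f \<in> borel_measurable (PiM {1..n} (\<lambda>_. borel))"
    and A: "A \<in> sets borel" and B: "B \<in> sets borel"
  shows "prob {\<omega>\<in>space M. f (\<lambda>i\<in>{1..n}. X i \<omega>) \<in> A \<and> X (Suc n) \<omega> \<in> B}
       = prob {\<omega>\<in>space M. f (\<lambda>i\<in>{1..n}. X i \<omega>) \<in> A} * prob {\<omega>\<in>space M. X 1 \<omega> \<in> B}"
proof -
  have "indep_var (PiM {1..n} (\<lambda>_. borel)) (\<lambda>\<omega>. \<lambda>i\<in>{1..n}. X i \<omega>)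
                  (PiM {Suc n} (\<lambda>_. borel)) (\<lambda>\<omega>. \<lambda>i\<in>{Suc n}. X i \<omega>)"
    by (rule indep_var_restrict[OF X_indep]) auto
  from indep_var_compose[OF this f measurable_component_singleton[of "Suc n" "{Suc n}" "\<lambda>_. borel"]]
  have "indep_var borel (\<lambda>\<omega>. f (\<lambda>i\<in>{1..n}. X i \<omega>)) borel (X (Suc n))"
    by (simp add: o_def)
  from indep_varD[OF this A B] show ?thesis
    using prob_X_Suc_in[OF B, of n] by (simp add: vimage_def Int_def conj_commute)
qed

lemma rw_S_eq_block: "j \<le> n \<Longrightarrow> rw_S X j \<omega> = (\<Sum>i\<in>{1..j}. (\<lambda>i\<in>{1..n}. X i \<omega>) i)"
  unfolding rw_S_def by (intro sum.cong) auto

lemma prob_rw_S_and_increment: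
  assumes "A \<in> sets borel" "B \<in> sets borel"
  shows "prob {\<omega>\<in>space M. rw_S X n \<omega> \<in> A \<and> X (Suc n) \<omega> \<in> B}
       = prob {\<omega>\<in>space M. rw_S X n \<omega> \<in> A} * prob {\<omega>\<in>space M. X 1 \<omega> \<in> B}"
  using prob_block_and_increment[of "\<lambda>x. \<Sum>i\<in>{1..n}. x i" n A B] assms rw_S_eq_block[of n n]
  by simp

text \<open>By independence, the probability of the disjoint events
  \<open>S\<^sub>n > v + K, X\<^sub>n\<^sub>+\<^sub>1 > -K\<close> and \<open>\<bar>S\<^sub>n\<bar> \<le> K, X\<^sub>n\<^sub>+\<^sub>1 > v + K\<close>,
  on each of which a single summand pushes \<open>S\<^sub>n\<^sub>+\<^sub>1\<close> above \<open>v\<close>.\<close>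

definition big_jump_mass :: "nat \<Rightarrow> real \<Rightarrow> real \<Rightarrow> real" where
  "big_jump_mass n K v = prob {\<omega>\<in>space M. rw_S X n \<omega> > v + K} * Fbar (- K)
     + prob {\<omega>\<in>space M. rw_S X n \<omega> \<in> {-K..K}} * Fbar (v + K)"

lemma big_jump_mass_le:
  assumes "K > 0" "0 \<le> v"
  shows "big_jump_mass n K v + prob {\<omega>\<in>space M. rw_S X n \<omega> \<in> {K<..v} \<and> rw_S X (Suc n) \<omega> > v}
       \<le> prob {\<omega>\<in>space M. rw_S X (Suc n) \<omega> > v}"
proof -
  define E1 where "E1 = {\<omega>\<in>space M. rw_S X n \<omega> \<in> {v + K<..} \<and> X (Suc n) \<omega> \<in> {-K<..}}"
  define E2 where "E2 = {\<omega>\<in>space M. rw_S X n \<omega> \<in> {-K..K} \<and> X (Suc n) \<omega> \<in> {v + K<..}}"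
  define R where "R = {\<omega>\<in>space M. rw_S X n \<omega> \<in> {K<..v} \<and> rw_S X (Suc n) \<omega> > v}"
  have events: "E1 \<in> events" "E2 \<in> events" "R \<in> events"
    unfolding E1_def E2_def R_def by measurable
  have "prob E1 + prob E2 = prob (E1 \<union> E2)"
    using events assms by (subst finite_measure_Union) (auto simp: E1_def E2_def)
  also have "\<dots> + prob R = prob (E1 \<union> E2 \<union> R)"
    using events \<open>K > 0\<close> by (subst finite_measure_Union) (auto simp: E1_def E2_def R_def)
  also have "\<dots> \<le> prob {\<omega>\<in>space M. rw_S X (Suc n) \<omega> > v}"
    using \<open>K > 0\<close> by (intro finite_measure_mono) (auto simp: E1_def E2_def R_def rw_S_Suc)
  finally show ?thesis
    using prob_rw_S_and_increment[of "{v + K<..}" "{-K<..}" n]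
      prob_rw_S_and_increment[of "{-K..K}" "{v + K<..}" n]
    by (simp add: big_jump_mass_def E1_def E2_def R_def Fbar_def)
qed

lemma prob_rw_S_Suc_gt_le:
  assumes "finite Q" and cover: "\<forall>w z. h < w \<and> h < z \<and> v < w + z \<longrightarrow> (\<exists>p\<in>Q. fst p < w \<and> snd p < z)"
  shows "prob {\<omega>\<in>space M. rw_S X (Suc n) \<omega> > v}
       \<le> Fbar (v - h) + prob {\<omega>\<in>space M. rw_S X n \<omega> > v - h}
         + (\<Sum>p\<in>Q. prob {\<omega>\<in>space M. rw_S X n \<omega> > fst p} * Fbar (snd p))"
proof -
  define A where "A = {\<omega>\<in>space M. X (Suc n) \<omega> > v - h}"
  define B where "B = {\<omega>\<in>space M. rw_S X n \<omega> > v - h}"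
  define C where "C p = {\<omega>\<in>space M. rw_S X n \<omega> \<in> {fst p<..} \<and> X (Suc n) \<omega> \<in> {snd p<..}}" for p
  have events: "A \<in> events" "B \<in> events"
    unfolding A_def B_def by measurable
  have C_events: "C p \<in> events" for p
    unfolding C_def by measurable
  then have C_image: "C ` Q \<subseteq> events"
    by blast
  have events_UN: "(\<Union>p\<in>Q. C p) \<in> events"
    using C_events \<open>finite Q\<close> by (intro sets.finite_UN) auto
  have "{\<omega>\<in>space M. rw_S X (Suc n) \<omega> > v} \<subseteq> A \<union> B \<union> (\<Union>p\<in>Q. C p)"
  proof
    fix \<omega> assume "\<omega> \<in> {\<omega>\<in>space M. rw_S X (Suc n) \<omega> > v}"
    then show "\<omega> \<in> A \<union> B \<union> (\<Union>p\<in>Q. C p)"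
      using cover[rule_format, of "rw_S X n \<omega>" "X (Suc n) \<omega>"]
      by (cases "X (Suc n) \<omega> > v - h \<or> rw_S X n \<omega> > v - h")
         (auto simp: A_def B_def C_def rw_S_Suc)
  qed
  then have "prob {\<omega>\<in>space M. rw_S X (Suc n) \<omega> > v} \<le> prob (A \<union> B \<union> (\<Union>p\<in>Q. C p))"
    using events events_UN by (intro finite_measure_mono) auto
  also have "\<dots> \<le> prob (A \<union> B) + prob (\<Union>p\<in>Q. C p)"
    using events events_UN by (intro measure_Un_le) auto
  also have "\<dots> \<le> prob A + prob B + (\<Sum>p\<in>Q. prob (C p))"
    using measure_Un_le[OF events] finite_measure_subadditive_finite[OF \<open>finite Q\<close> C_image]
    by linarith
  finally have "prob {\<omega>\<in>space M. rw_S X (Suc n) \<omega> > v} \<le> prob A + prob B + (\<Sum>p\<in>Q. prob (C p))" .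
  moreover have "prob (C p) = prob {\<omega>\<in>space M. rw_S X n \<omega> > fst p} * Fbar (snd p)" for p
    using prob_rw_S_and_increment[of "{fst p<..}" "{snd p<..}" n] by (simp add: C_def Fbar_def)
  ultimately show ?thesis
    by (simp add: A_def B_def prob_X_Suc_gt)
qed

lemma prob_rw_S_Suc_gt_le_Fbar:
  assumes "finite Q" and cover: "\<forall>w z. h < w \<and> h < z \<and> v < w + z \<longrightarrow> (\<exists>p\<in>Q. fst p < w \<and> snd p < z)"
    and t0: "\<forall>p\<in>Q. t0 \<le> fst p" "t0 \<le> v - h"
    and S_n: "\<And>t. t0 \<le> t \<Longrightarrow> prob {\<omega>\<in>space M. rw_S X n \<omega> > t} \<le> c * Fbar t"
  shows "prob {\<omega>\<in>space M. rw_S X (Suc n) \<omega> > v}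
       \<le> Fbar (v - h) + c * Fbar (v - h) + c * (\<Sum>p\<in>Q. Fbar (fst p) * Fbar (snd p))"
proof -
  have "(\<Sum>p\<in>Q. prob {\<omega>\<in>space M. rw_S X n \<omega> > fst p} * Fbar (snd p))
      \<le> (\<Sum>p\<in>Q. c * (Fbar (fst p) * Fbar (snd p)))"
  proof (rule sum_mono)
    fix p assume "p \<in> Q"
    with t0 S_n have "prob {\<omega>\<in>space M. rw_S X n \<omega> > fst p} \<le> c * Fbar (fst p)"
      by blast
    from mult_right_mono[OF this Fbar_nonneg]
    show "prob {\<omega>\<in>space M. rw_S X n \<omega> > fst p} * Fbar (snd p) \<le> c * (Fbar (fst p) * Fbar (snd p))"
      by (simp add: mult.assoc)
  qed
  then show ?thesis
    using prob_rw_S_Suc_gt_le[OF \<open>finite Q\<close> cover, of n] S_n[OF t0(2)]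
    by (simp add: sum_distrib_left)
qed

lemma rw_confined_events: "{\<omega>\<in>space M. rw_confined X n y \<omega>} \<in> events"
  unfolding rw_confined_def by measurable

lemma rw_tau_gt_events: "{\<omega>\<in>space M. enat n < rw_tau X \<omega>} \<in> events"
  unfolding rw_tau_gt_iff by measurable

lemma prob_rw_confined_and_increment:
  "prob {\<omega>\<in>space M. rw_confined X n y \<omega> \<and> X (Suc n) \<omega> > c}
     = prob {\<omega>\<in>space M. rw_confined X n y \<omega>} * Fbar c"
proof -
  define f :: "(nat \<Rightarrow> real) \<Rightarrow> real" where
    "f x = (if \<forall>j\<in>{1..n}. 0 < (\<Sum>i\<in>{1..j}. x i) \<and> (\<Sum>i\<in>{1..j}. x i) \<le> y then 1 else 0)" for x
  have "f \<in> borel_measurable (PiM {1..n} (\<lambda>_. borel))"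
    unfolding f_def by measurable
  moreover have "f (\<lambda>i\<in>{1..n}. X i \<omega>) \<in> {1} \<longleftrightarrow> rw_confined X n y \<omega>" for \<omega>
    using rw_S_eq_block[of _ n \<omega>] by (auto simp: f_def rw_confined_def)
  ultimately show ?thesis
    using prob_block_and_increment[of f n "{1}" "{c<..}"] by (simp add: Fbar_def)
qed

lemma prob_rw_confined_le_tau:
  "prob {\<omega>\<in>space M. rw_confined X n y \<omega>} \<le> prob {\<omega>\<in>space M. enat n < rw_tau X \<omega>}"
  using rw_tau_gt_events by (intro finite_measure_mono) (auto simp: rw_confined_imp_tau_gt)

lemma prob_rw_confined_tendsto:
  "((\<lambda>y. prob {\<omega>\<in>space M. rw_confined X n y \<omega>}) \<longlongrightarrow> prob {\<omega>\<in>space M. enat n < rw_tau X \<omega>}) at_top"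
proof (rule tendsto_sandwich)
  let ?tau = "prob {\<omega>\<in>space M. enat n < rw_tau X \<omega>}"
  show "\<forall>\<^sub>F y in at_top. prob {\<omega>\<in>space M. rw_confined X n y \<omega>} \<le> ?tau"
    by (intro always_eventually allI finite_measure_mono)
       (auto simp: rw_confined_def rw_tau_gt_iff)
  show "\<forall>\<^sub>F y in at_top. ?tau - (\<Sum>j\<in>{1..n}. prob {\<omega>\<in>space M. rw_S X j \<omega> > y})
          \<le> prob {\<omega>\<in>space M. rw_confined X n y \<omega>}"
  proof (intro always_eventually allI)
    fix y
    have "?tau \<le> prob ({\<omega>\<in>space M. rw_confined X n y \<omega>} \<union> (\<Union>j\<in>{1..n}. {\<omega>\<in>space M. rw_S X j \<omega> > y}))"
      using rw_confined_events
      by (intro finite_measure_mono) (auto simp: rw_confined_def rw_tau_gt_iff not_le)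
    also have "\<dots> \<le> prob {\<omega>\<in>space M. rw_confined X n y \<omega>} + prob (\<Union>j\<in>{1..n}. {\<omega>\<in>space M. rw_S X j \<omega> > y})"
      using rw_confined_events by (intro measure_Un_le) auto
    also have "prob (\<Union>j\<in>{1..n}. {\<omega>\<in>space M. rw_S X j \<omega> > y}) \<le> (\<Sum>j\<in>{1..n}. prob {\<omega>\<in>space M. rw_S X j \<omega> > y})"
      by (intro finite_measure_subadditive_finite) auto
    finally show "?tau - (\<Sum>j\<in>{1..n}. prob {\<omega>\<in>space M. rw_S X j \<omega> > y}) \<le> prob {\<omega>\<in>space M. rw_confined X n y \<omega>}"
      by simp
  qed
  have "((\<lambda>y. ?tau - (\<Sum>j\<in>{1..n}. prob {\<omega>\<in>space M. rw_S X j \<omega> > y})) \<longlongrightarrow> ?tau - 0) at_top"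
    by (intro tendsto_intros tendsto_null_sum prob_gt_tendsto_0) measurable
  then show "((\<lambda>y. ?tau - (\<Sum>j\<in>{1..n}. prob {\<omega>\<in>space M. rw_S X j \<omega> > y})) \<longlongrightarrow> ?tau) at_top"
    by simp
qed (rule tendsto_const)

lemma prob_first_passage_ge:
  assumes "0 < y" "y < v"
  shows "prob {\<omega>\<in>space M. rw_confined X n y \<omega>} * Fbar v
       \<le> prob {\<omega>\<in>space M. rw_S X (Suc n) \<omega> > v \<and> rw_sigma X y \<omega> = enat (Suc n)}"
proof -
  have "{\<omega>\<in>space M. rw_confined X n y \<omega> \<and> X (Suc n) \<omega> > v}
      \<subseteq> {\<omega>\<in>space M. rw_S X (Suc n) \<omega> > v \<and> rw_sigma X y \<omega> = enat (Suc n)}"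
  proof safe
    fix \<omega> assume "rw_confined X n y \<omega>" "X (Suc n) \<omega> > v"
    moreover from this have "rw_S X (Suc n) \<omega> > v"
      using rw_confined_rw_S[of X n y \<omega>] assms by (simp add: rw_S_Suc)
    ultimately have "rw_S X (Suc n) \<omega> > v \<and> rw_sigma X y \<omega> = enat (Suc n)"
      by (intro rw_sigma_eq_Suc_iff[OF assms, THEN iffD2] conjI)
    then show "rw_S X (Suc n) \<omega> > v" "rw_sigma X y \<omega> = enat (Suc n)"
      by simp_all
  qed
  moreover have "{\<omega>\<in>space M. rw_S X (Suc n) \<omega> > v \<and> rw_sigma X y \<omega> = enat (Suc n)} \<in> events"
    unfolding rw_sigma_eq_Suc_iff[OF assms] rw_confined_def by measurable
  ultimately show ?thesis
    by (subst prob_rw_confined_and_increment[symmetric]) (rule finite_measure_mono)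
qed

lemma prob_first_passage_le:
  assumes "0 < y" "y < v" "K > 0"
  shows "prob {\<omega>\<in>space M. rw_S X (Suc n) \<omega> > v \<and> rw_sigma X y \<omega> = enat (Suc n)}
       \<le> prob {\<omega>\<in>space M. rw_confined X n y \<omega>} * Fbar (v - K)
         + (prob {\<omega>\<in>space M. rw_S X (Suc n) \<omega> > v} - big_jump_mass n K v)"
proof -
  define A where "A = {\<omega>\<in>space M. rw_confined X n y \<omega> \<and> X (Suc n) \<omega> > v - K}"
  define R where "R = {\<omega>\<in>space M. rw_S X n \<omega> \<in> {K<..v} \<and> rw_S X (Suc n) \<omega> > v}"
  have events: "A \<in> events" "R \<in> events"
    unfolding A_def R_def rw_confined_def by measurable
  have "{\<omega>\<in>space M. rw_S X (Suc n) \<omega> > v \<and> rw_sigma X y \<omega> = enat (Suc n)} \<subseteq> A \<union> R"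
  proof
    fix \<omega> assume "\<omega> \<in> {\<omega>\<in>space M. rw_S X (Suc n) \<omega> > v \<and> rw_sigma X y \<omega> = enat (Suc n)}"
    then have "\<omega> \<in> space M" and \<omega>: "rw_confined X n y \<omega> \<and> rw_S X (Suc n) \<omega> > v"
      using rw_sigma_eq_Suc_iff[OF assms(1,2), where X = X and n = n and \<omega> = \<omega>] by auto
    show "\<omega> \<in> A \<union> R"
    proof (cases "X (Suc n) \<omega> > v - K")
      case True
      with \<open>\<omega> \<in> space M\<close> \<omega> show ?thesis
        by (simp add: A_def)
    next
      case False
      with \<open>\<omega> \<in> space M\<close> \<omega> rw_confined_rw_S[of X n y \<omega>] assms show ?thesis
        by (auto simp: R_def rw_S_Suc)
    qed
  qed
  then have "prob {\<omega>\<in>space M. rw_S X (Suc n) \<omega> > v \<and> rw_sigma X y \<omega> = enat (Suc n)} \<le> prob A + prob R"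
    using events measure_Un_le[OF events] by (meson finite_measure_mono order_trans sets.Un)
  moreover have "prob A = prob {\<omega>\<in>space M. rw_confined X n y \<omega>} * Fbar (v - K)"
    unfolding A_def by (rule prob_rw_confined_and_increment)
  moreover have "prob R \<le> prob {\<omega>\<in>space M. rw_S X (Suc n) \<omega> > v} - big_jump_mass n K v"
    using big_jump_mass_le[of K v n] assms unfolding R_def by simp
  ultimately show ?thesis
    by linarith
qed

end

section \<open>Sums and first passages under a one-big-jump tail\<close>

locale big_jump_walk = iid_walk +
  assumes one_big_jump_Fbar: "one_big_jump_tail Fbar"
begin

lemma Fbar_pos: "\<forall>\<^sub>F v in at_top. Fbar v > 0"
  by (rule one_big_jump_tail_pos[OF one_big_jump_Fbar])

lemma Fbar_shift_ratio: "((\<lambda>v. Fbar (v + K) / Fbar v) \<longlongrightarrow> 1) at_top"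
  by (rule one_big_jump_tail_shift_ratio[OF one_big_jump_Fbar Fbar_antimono])

lemma Fbar_shift_le: "\<epsilon> > 0 \<Longrightarrow> \<forall>\<^sub>F v in at_top. Fbar (v - c) \<le> (1 + \<epsilon>) * Fbar v"
  by (rule one_big_jump_tail_shift_le[OF one_big_jump_Fbar Fbar_antimono])

lemma tendsto_ratio_Fbar_shift:
  assumes "((\<lambda>v. f v / Fbar v) \<longlongrightarrow> c) at_top"
  shows "((\<lambda>v. f (v + K) / Fbar v) \<longlongrightarrow> c) at_top"
proof -
  have shift: "filterlim (\<lambda>v. v + K) at_top at_top"
    by (subst add.commute) (rule filterlim_tendsto_add_at_top[OF tendsto_const filterlim_ident])
  have "((\<lambda>v. f (v + K) / Fbar (v + K) * (Fbar (v + K) / Fbar v)) \<longlongrightarrow> c * 1) at_top"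
    by (intro tendsto_mult Fbar_shift_ratio filterlim_compose[OF assms shift])
  moreover have "\<forall>\<^sub>F v in at_top. f (v + K) / Fbar (v + K) * (Fbar (v + K) / Fbar v) = f (v + K) / Fbar v"
    using eventually_at_top_add_const[OF Fbar_pos, of K] by eventually_elim simp
  ultimately show ?thesis
    by (auto intro: Lim_transform_eventually)
qed

lemma big_jump_mass_ratio:
  assumes "((\<lambda>v. prob {\<omega>\<in>space M. rw_S X n \<omega> > v} / Fbar v) \<longlongrightarrow> real n) at_top"
  shows "((\<lambda>v. big_jump_mass n K v / Fbar v)
           \<longlongrightarrow> real n * Fbar (- K) + prob {\<omega>\<in>space M. rw_S X n \<omega> \<in> {-K..K}}) at_top"
proof -
  have "((\<lambda>v. prob {\<omega>\<in>space M. rw_S X n \<omega> > v + K} / Fbar v * Fbar (- K)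
           + prob {\<omega>\<in>space M. rw_S X n \<omega> \<in> {-K..K}} * (Fbar (v + K) / Fbar v))
         \<longlongrightarrow> real n * Fbar (- K) + prob {\<omega>\<in>space M. rw_S X n \<omega> \<in> {-K..K}} * 1) at_top"
    by (intro tendsto_intros Fbar_shift_ratio tendsto_ratio_Fbar_shift[OF assms])
  then show ?thesis
    by (simp add: big_jump_mass_def add_divide_distrib)
qed

lemma big_jump_mass_limit:
  "((\<lambda>K. real n * Fbar (- K) + prob {\<omega>\<in>space M. rw_S X n \<omega> \<in> {-K..K}}) \<longlongrightarrow> real n + 1) at_top"
proof -
  have "prob {\<omega>\<in>space M. rw_S X n \<omega> \<in> {-K..K}} = 1 - prob {\<omega>\<in>space M. \<bar>rw_S X n \<omega>\<bar> > K}" for K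
  proof -
    have "prob {\<omega>\<in>space M. rw_S X n \<omega> \<in> {-K..K}} = prob {\<omega>\<in>space M. \<not> \<bar>rw_S X n \<omega>\<bar> > K}"
      by (rule arg_cong[where f = prob]) auto
    also have "\<dots> = 1 - prob {\<omega>\<in>space M. \<bar>rw_S X n \<omega>\<bar> > K}"
      by (rule prob_neg) measurable
    finally show ?thesis .
  qed
  moreover have "((\<lambda>K. real n * Fbar (- K) + (1 - prob {\<omega>\<in>space M. \<bar>rw_S X n \<omega>\<bar> > K}))
                   \<longlongrightarrow> real n * 1 + (1 - 0)) at_top"
    by (intro tendsto_intros filterlim_compose[OF Fbar_at_bot filterlim_uminus_at_bot_at_top]
        prob_gt_tendsto_0) measurable
  ultimately show ?thesis
    by simp
qed

lemma prob_rw_S_Suc_gt_ratio_lower: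
  assumes IH: "((\<lambda>v. prob {\<omega>\<in>space M. rw_S X n \<omega> > v} / Fbar v) \<longlongrightarrow> real n) at_top"
    and "a < real n + 1"
  shows "\<forall>\<^sub>F v in at_top. a < prob {\<omega>\<in>space M. rw_S X (Suc n) \<omega> > v} / Fbar v"
proof -
  have "\<forall>\<^sub>F K in at_top. K > 0 \<and> a < real n * Fbar (- K) + prob {\<omega>\<in>space M. rw_S X n \<omega> \<in> {-K..K}}"
    using eventually_gt_at_top order_tendstoD(1)[OF big_jump_mass_limit \<open>a < real n + 1\<close>]
    by (rule eventually_conj)
  then obtain K where "K > 0" and "a < real n * Fbar (- K) + prob {\<omega>\<in>space M. rw_S X n \<omega> \<in> {-K..K}}"
    using eventually_happens'[OF trivial_limit_at_top_linorder] by blast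
  from order_tendstoD(1)[OF big_jump_mass_ratio[OF IH] this(2)] Fbar_pos eventually_ge_at_top[of 0]
  show ?thesis
  proof eventually_elim
    case (elim v)
    then have "big_jump_mass n K v \<le> prob {\<omega>\<in>space M. rw_S X (Suc n) \<omega> > v}"
      by (intro order_trans[OF _ big_jump_mass_le[OF \<open>K > 0\<close>, of v n]]) auto
    then have "big_jump_mass n K v / Fbar v \<le> prob {\<omega>\<in>space M. rw_S X (Suc n) \<omega> > v} / Fbar v"
      using elim(2) by (simp add: divide_right_mono)
    with elim(1) show ?case
      by linarith
  qed
qed

lemma prob_rw_S_Suc_gt_ratio_upper:
  assumes IH: "((\<lambda>v. prob {\<omega>\<in>space M. rw_S X n \<omega> > v} / Fbar v) \<longlongrightarrow> real n) at_top"
    and "real n + 1 < a"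
  shows "\<forall>\<^sub>F v in at_top. prob {\<omega>\<in>space M. rw_S X (Suc n) \<omega> > v} / Fbar v < a"
proof -
  obtain e where "0 < e" and e_small: "(1 + e) + (real n + e) * (1 + e) + (real n + e) * e < a"
    using exists_small_perturbation[OF \<open>real n + 1 < a\<close>] by blast
  obtain h where h_half: "\<forall>\<^sub>F v in at_top. h v \<le> v / 2"
    and h_insensitive: "\<forall>\<^sub>F v in at_top. Fbar (v - h v) \<le> (1 + e) * Fbar v"
    and h_two_jumps: "two_big_jumps_negligible Fbar h"
    using one_big_jump_Fbar \<open>0 < e\<close> unfolding one_big_jump_tail_def by blast
  have "\<forall>\<^sub>F t in at_top. prob {\<omega>\<in>space M. rw_S X n \<omega> > t} / Fbar t < real n + e"
    using order_tendstoD(2)[OF IH] \<open>0 < e\<close> by simp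
  with Fbar_pos have "\<forall>\<^sub>F t in at_top. prob {\<omega>\<in>space M. rw_S X n \<omega> > t} \<le> (real n + e) * Fbar t"
    by eventually_elim (simp add: divide_less_eq)
  then obtain t0 where t0: "\<And>t. t0 \<le> t \<Longrightarrow> prob {\<omega>\<in>space M. rw_S X n \<omega> > t} \<le> (real n + e) * Fbar t"
    by (auto simp: eventually_at_top_linorder)
  have "\<forall>\<^sub>F v in at_top. \<exists>Q. finite Q \<and> (\<forall>p\<in>Q. t0 \<le> fst p \<and> t0 \<le> snd p) \<and>
          (\<forall>w z. h v < w \<and> h v < z \<and> v < w + z \<longrightarrow> (\<exists>p\<in>Q. fst p < w \<and> snd p < z)) \<and>
          (\<Sum>p\<in>Q. Fbar (fst p) * Fbar (snd p)) \<le> e * Fbar v"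
    using h_two_jumps \<open>0 < e\<close> unfolding two_big_jumps_negligible_def by blast
  with h_half h_insensitive Fbar_pos eventually_ge_at_top[of "2 * t0"]
  show ?thesis
  proof eventually_elim
    case (elim v)
    then obtain Q where Q: "finite Q" "\<forall>p\<in>Q. t0 \<le> fst p"
      "\<forall>w z. h v < w \<and> h v < z \<and> v < w + z \<longrightarrow> (\<exists>p\<in>Q. fst p < w \<and> snd p < z)"
      "(\<Sum>p\<in>Q. Fbar (fst p) * Fbar (snd p)) \<le> e * Fbar v"
      by blast
    have "prob {\<omega>\<in>space M. rw_S X (Suc n) \<omega> > v}
        \<le> Fbar (v - h v) + (real n + e) * Fbar (v - h v)
          + (real n + e) * (\<Sum>p\<in>Q. Fbar (fst p) * Fbar (snd p))"
      by (rule prob_rw_S_Suc_gt_le_Fbar[OF Q(1,3,2)]) (use t0 elim in auto)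
    moreover have "(real n + e) * (\<Sum>p\<in>Q. Fbar (fst p) * Fbar (snd p)) \<le> (real n + e) * (e * Fbar v)"
      using Q(4) \<open>0 < e\<close> by (intro mult_left_mono) auto
    ultimately have "prob {\<omega>\<in>space M. rw_S X (Suc n) \<omega> > v}
        \<le> Fbar (v - h v) + (real n + e) * Fbar (v - h v) + (real n + e) * (e * Fbar v)"
      by linarith
    also have "\<dots> \<le> ((1 + e) + (real n + e) * (1 + e) + (real n + e) * e) * Fbar v"
      using elim \<open>0 < e\<close> mult_left_mono[of "Fbar (v - h v)" "(1 + e) * Fbar v" "real n + e"]
      by (simp add: algebra_simps)
    also have "\<dots> < a * Fbar v"
      using e_small elim by (intro mult_strict_right_mono) auto
    finally show ?case
      using elim by (simp add: divide_less_eq)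
  qed
qed

lemma prob_rw_S_gt_ratio: "((\<lambda>v. prob {\<omega>\<in>space M. rw_S X n \<omega> > v} / Fbar v) \<longlongrightarrow> real n) at_top"
proof (induction n)
  case 0
  have "\<forall>\<^sub>F v in at_top. 0 = prob {\<omega>\<in>space M. rw_S X 0 \<omega> > v} / Fbar v"
    using eventually_ge_at_top[of 0] by eventually_elim auto
  then show ?case
    by (auto intro: Lim_transform_eventually)
next
  case (Suc n)
  then show ?case
    using prob_rw_S_Suc_gt_ratio_lower prob_rw_S_Suc_gt_ratio_upper
    by (intro order_tendstoI) auto
qed

lemma big_jump_remainder_small:
  assumes "e > 0"
  obtains K where "K > 0"
    "\<forall>\<^sub>F v in at_top. prob {\<omega>\<in>space M. rw_S X (Suc n) \<omega> > v} - big_jump_mass n K v \<le> e * Fbar v"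
proof -
  have "\<forall>\<^sub>F K in at_top. K > 0 \<and>
          real n + 1 - e / 2 < real n * Fbar (- K) + prob {\<omega>\<in>space M. rw_S X n \<omega> \<in> {-K..K}}"
    using eventually_gt_at_top order_tendstoD(1)[OF big_jump_mass_limit] \<open>e > 0\<close>
    by (intro eventually_conj) auto
  then obtain K where "K > 0"
    and K: "real n + 1 - e / 2 < real n * Fbar (- K) + prob {\<omega>\<in>space M. rw_S X n \<omega> \<in> {-K..K}}"
    using eventually_happens'[OF trivial_limit_at_top_linorder] by blast
  have "\<forall>\<^sub>F v in at_top. real n + 1 - e / 2 < big_jump_mass n K v / Fbar v"
    by (rule order_tendstoD(1)[OF big_jump_mass_ratio[OF prob_rw_S_gt_ratio] K])
  moreover have "\<forall>\<^sub>F v in at_top. prob {\<omega>\<in>space M. rw_S X (Suc n) \<omega> > v} / Fbar v < real n + 1 + e / 2"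
    using order_tendstoD(2)[OF prob_rw_S_gt_ratio[of "Suc n"]] \<open>e > 0\<close> by simp
  ultimately have "\<forall>\<^sub>F v in at_top. prob {\<omega>\<in>space M. rw_S X (Suc n) \<omega> > v} - big_jump_mass n K v \<le> e * Fbar v"
    using Fbar_pos by eventually_elim (simp add: field_simps)
  with \<open>K > 0\<close> show thesis
    by (rule that)
qed

lemma first_passage_upper:
  assumes "e > 0"
  shows "\<forall>\<^sub>F v in at_top. \<forall>y. 0 < y \<longrightarrow> y < v \<longrightarrow>
           prob {\<omega>\<in>space M. rw_S X (Suc n) \<omega> > v \<and> rw_sigma X y \<omega> = enat (Suc n)}
           \<le> (prob {\<omega>\<in>space M. rw_confined X n y \<omega>} * (1 + e) + e) * Fbar v"
proof -
  obtain K where "K > 0" and remainder: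
    "\<forall>\<^sub>F v in at_top. prob {\<omega>\<in>space M. rw_S X (Suc n) \<omega> > v} - big_jump_mass n K v \<le> e * Fbar v"
    using big_jump_remainder_small[OF \<open>e > 0\<close>] by blast
  from remainder Fbar_shift_le[OF \<open>e > 0\<close>, of K] show ?thesis
  proof eventually_elim
    case (elim v)
    show ?case
    proof (intro allI impI)
      fix y assume "0 < y" "y < v"
      let ?conf = "prob {\<omega>\<in>space M. rw_confined X n y \<omega>}"
      have "prob {\<omega>\<in>space M. rw_S X (Suc n) \<omega> > v \<and> rw_sigma X y \<omega> = enat (Suc n)}
          \<le> ?conf * Fbar (v - K) + e * Fbar v"
        using prob_first_passage_le[OF \<open>0 < y\<close> \<open>y < v\<close> \<open>K > 0\<close>, of n] elim(1) by linarith
      also have "\<dots> \<le> ?conf * ((1 + e) * Fbar v) + e * Fbar v"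
        using elim(2) by (intro add_right_mono mult_left_mono) auto
      finally show "prob {\<omega>\<in>space M. rw_S X (Suc n) \<omega> > v \<and> rw_sigma X y \<omega> = enat (Suc n)}
          \<le> (?conf * (1 + e) + e) * Fbar v"
        by (simp add: algebra_simps)
    qed
  qed
qed

theorem first_passage_ratio:
  assumes "\<epsilon> > 0"
  shows "\<forall>\<^sub>F y in at_top. \<forall>v>y.
           \<bar>prob {\<omega>\<in>space M. rw_S X (Suc n) \<omega> > v \<and> rw_sigma X y \<omega> = enat (Suc n)} / Fbar v
            - prob {\<omega>\<in>space M. enat n < rw_tau X \<omega>}\<bar> \<le> \<epsilon>"
proof -
  let ?tau = "prob {\<omega>\<in>space M. enat n < rw_tau X \<omega>}"
  let ?conf = "\<lambda>y. prob {\<omega>\<in>space M. rw_confined X n y \<omega>}"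
  let ?E = "\<lambda>y v. prob {\<omega>\<in>space M. rw_S X (Suc n) \<omega> > v \<and> rw_sigma X y \<omega> = enat (Suc n)}"
  have e: "\<epsilon> / 2 > 0"
    using assms by simp
  from first_passage_upper[OF e, of n] Fbar_pos
  have "\<forall>\<^sub>F v in at_top. Fbar v > 0 \<and>
          (\<forall>y. 0 < y \<longrightarrow> y < v \<longrightarrow> ?E y v \<le> (?conf y * (1 + \<epsilon> / 2) + \<epsilon> / 2) * Fbar v)"
    by eventually_elim blast
  then obtain V where V: "\<And>v y. V \<le> v \<Longrightarrow> 0 < y \<Longrightarrow> y < v \<Longrightarrow>
      Fbar v > 0 \<and> ?E y v \<le> (?conf y * (1 + \<epsilon> / 2) + \<epsilon> / 2) * Fbar v"
    by (auto simp: eventually_at_top_linorder)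
  have "\<forall>\<^sub>F y in at_top. ?tau - \<epsilon> < ?conf y"
    using order_tendstoD(1)[OF prob_rw_confined_tendsto] assms by simp
  with eventually_ge_at_top[of V] eventually_gt_at_top[of 0]
  show ?thesis
  proof eventually_elim
    case (elim y)
    show ?case
    proof (intro allI impI)
      fix v assume "v > y"
      with V[of v y] elim have Fbar_v: "Fbar v > 0"
        and upper: "?E y v / Fbar v \<le> ?conf y * (1 + \<epsilon> / 2) + \<epsilon> / 2"
        by (auto simp: divide_le_eq)
      have "?conf y * (\<epsilon> / 2) \<le> \<epsilon> / 2"
        using e by (intro mult_left_le_one_le) auto
      with upper prob_rw_confined_le_tau[of n y] have "?E y v / Fbar v \<le> ?tau + \<epsilon>"
        by (simp add: algebra_simps)
      moreover have "?conf y \<le> ?E y v / Fbar v"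
        using prob_first_passage_ge[OF \<open>0 < y\<close> \<open>y < v\<close>] Fbar_v by (simp add: le_divide_eq)
      ultimately show "\<bar>?E y v / Fbar v - ?tau\<bar> \<le> \<epsilon>"
        using elim by (simp add: abs_le_iff)
    qed
  qed
qed

end

section \<open>Regularly varying tails\<close>

lemma regularly_varying_ratio:
  fixes T L :: "real \<Rightarrow> real"
  assumes L: "slowly_varying L" and T: "\<forall>x>0. T x = x powr (-\<alpha>) * L x" and "c > 0"
  shows "((\<lambda>v. T (c * v) / T v) \<longlongrightarrow> c powr (-\<alpha>)) at_top"
proof -
  have "((\<lambda>v. c powr (-\<alpha>) * (L (c * v) / L v)) \<longlongrightarrow> c powr (-\<alpha>) * 1) at_top"
    using L \<open>c > 0\<close> unfolding slowly_varying_def by (intro tendsto_mult_left) blast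
  moreover have "\<forall>\<^sub>F v in at_top. c powr (-\<alpha>) * (L (c * v) / L v) = T (c * v) / T v"
    using eventually_gt_at_top[of 0]
    by eventually_elim (use T \<open>c > 0\<close> in \<open>auto simp: powr_mult\<close>)
  ultimately show ?thesis
    by (auto intro: Lim_transform_eventually)
qed

lemma regularly_varying_one_big_jump_tail:
  fixes T L :: "real \<Rightarrow> real"
  assumes T0: "(T \<longlongrightarrow> 0) at_top" and L: "slowly_varying L"
    and T: "\<forall>x>0. T x = x powr (-\<alpha>) * L x"
  shows "one_big_jump_tail T"
  unfolding one_big_jump_tail_def
proof (intro conjI allI impI)
  show T_pos: "\<forall>\<^sub>F v in at_top. T v > 0"
    using eventually_gt_at_top[of 0] L[unfolded slowly_varying_def, THEN conjunct1]
    by eventually_elim (simp add: T)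
  fix \<epsilon> :: real assume "\<epsilon> > 0"
  then obtain \<delta> where \<delta>: "0 < \<delta>" "\<delta> < 1 / 2" "(1 - \<delta>) powr (-\<alpha>) < 1 + \<epsilon>"
    by (rule exists_small_shrink)
  have h_top: "filterlim (\<lambda>v. \<delta> * v) at_top at_top"
    using \<delta> by real_asymp
  show "\<exists>h. filterlim h at_top at_top \<and> (\<forall>\<^sub>F v in at_top. h v \<le> v / 2) \<and>
      (\<forall>\<^sub>F v in at_top. T (v - h v) \<le> (1 + \<epsilon>) * T v) \<and> two_big_jumps_negligible T h"
  proof (intro exI[of _ "\<lambda>v. \<delta> * v"] conjI h_top)
    show "\<forall>\<^sub>F v in at_top. \<delta> * v \<le> v / 2"
      using eventually_ge_at_top[of 0]
      by eventually_elim (use \<delta> mult_right_mono[of \<delta> "1 / 2"] in auto)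
    have "\<forall>\<^sub>F v in at_top. T ((1 - \<delta>) * v) \<le> (1 + \<epsilon>) * T v"
      using \<delta> by (intro eventually_le_of_ratio_less[OF regularly_varying_ratio[OF L T] _ T_pos]) auto
    then show "\<forall>\<^sub>F v in at_top. T (v - \<delta> * v) \<le> (1 + \<epsilon>) * T v"
      by (simp add: algebra_simps)
    show "two_big_jumps_negligible T (\<lambda>v. \<delta> * v)"
      unfolding two_big_jumps_negligible_def
    proof (intro allI impI)
      fix \<eta> t0 :: real assume "\<eta> > 0"
      have "((\<lambda>v. T (\<delta> * v) * (T (\<delta> * v) / T v)) \<longlongrightarrow> 0 * \<delta> powr (-\<alpha>)) at_top"
        using \<delta> by (intro tendsto_mult filterlim_compose[OF T0 h_top] regularly_varying_ratio[OF L T])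
      then have "\<forall>\<^sub>F v in at_top. T (\<delta> * v) * T (\<delta> * v) \<le> \<eta> * T v"
        using \<open>\<eta> > 0\<close> by (intro eventually_le_of_ratio_less[OF _ _ T_pos]) (simp_all add: times_divide_eq_right)
      with filterlim_at_top[THEN iffD1, OF h_top, rule_format, of t0]
      show "\<forall>\<^sub>F v in at_top. \<exists>Q. finite Q \<and> (\<forall>p\<in>Q. t0 \<le> fst p \<and> t0 \<le> snd p) \<and>
          (\<forall>w z. \<delta> * v < w \<and> \<delta> * v < z \<and> v < w + z \<longrightarrow> (\<exists>p\<in>Q. fst p < w \<and> snd p < z)) \<and>
          (\<Sum>p\<in>Q. T (fst p) * T (snd p)) \<le> \<eta> * T v"
        by eventually_elim (intro exI[of _ "{(\<delta> * v, \<delta> * v)}" for v], auto)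
    qed
  qed
qed

section \<open>Weibull-type tails\<close>

locale sublinear_exponent =
  fixes g :: "real \<Rightarrow> real" and \<beta> :: real
  assumes \<beta>: "0 < \<beta>" "\<beta> < 1 / 2"
    and g_mono: "mono_on {0<..} g"
    and g_over_powr_antimono: "antimono_on {0<..} (\<lambda>x. g x / x powr \<beta>)"
begin

lemma g_le: "0 < x \<Longrightarrow> x \<le> y \<Longrightarrow> g x \<le> g y"
  using mono_onD[OF g_mono, of x y] by auto

lemma g_le_scaled:
  assumes "0 < x" "x \<le> y"
  shows "g y \<le> g x * (y / x) powr \<beta>"
proof -
  have "g y / y powr \<beta> \<le> g x / x powr \<beta>"
    using monotone_onD[OF g_over_powr_antimono, of x y] assms by auto
  then show ?thesis
    using assms by (simp add: powr_divide divide_le_eq mult.commute)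
qed

lemma g_nonneg:
  assumes "0 < x"
  shows "0 \<le> g x"
proof (rule ccontr)
  assume "\<not> 0 \<le> g x"
  moreover have "g x \<le> g x * 2 powr \<beta>"
    using g_le[of x "2 * x"] g_le_scaled[of x "2 * x"] assms by simp
  moreover have "1 < 2 powr \<beta>"
    using \<beta> by simp
  ultimately show False
    by (simp add: mult_less_cancel_left_neg)
qed

lemma g_le_powr: "1 \<le> y \<Longrightarrow> g y \<le> g 1 * y powr \<beta>"
  using g_le_scaled[of 1 y] by simp

text \<open>This is where \<open>\<beta> \<le> 1 / 2\<close> is needed.\<close>

lemma g_diff_le:
  assumes "0 < x" "2 * x \<le> v"
  shows "g v - g (v - x) \<le> g (x / 2)"
proof -
  define u where "u = v / x"
  have u: "u \<ge> 2" "v = u * x"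
    using assms by (auto simp: u_def field_simps)
  have "((v - x) / v) powr 1 \<le> ((v - x) / v) powr \<beta>"
    using assms \<beta> by (intro powr_mono') auto
  then have "g v * ((v - x) / v) \<le> g v * ((v - x) / v) powr \<beta>"
    using assms g_nonneg[of v] by (intro mult_left_mono) auto
  also have "\<dots> \<le> g (v - x)"
    using g_le_scaled[of "v - x" v] assms g_nonneg[of "v - x"]
    by (auto simp: powr_divide field_simps)
  finally have "g v - g (v - x) \<le> g v * (x / v)"
    using assms by (simp add: field_simps)
  also have "\<dots> \<le> g (x / 2) * (2 * u) powr \<beta> * (1 / u)"
  proof -
    have quot: "x / v = 1 / u" "v / (x / 2) = 2 * u"
      using u assms by (auto simp: field_simps)
    have "g v \<le> g (x / 2) * (2 * u) powr \<beta>"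
      using g_le_scaled[of "x / 2" v] assms unfolding quot(2) by simp
    then show ?thesis
      unfolding quot(1) using u by (intro mult_right_mono) auto
  qed
  also have "\<dots> \<le> g (x / 2)"
  proof -
    have "(2 * u) powr \<beta> \<le> (2 * u) powr (1 / 2)"
      using u \<beta> by (intro powr_mono) auto
    also have "\<dots> \<le> u"
    proof -
      have "2 * u \<le> u\<^sup>2"
        using u by (simp add: power2_eq_square mult_right_mono)
      then have "sqrt (2 * u) \<le> sqrt (u\<^sup>2)"
        by (rule real_sqrt_le_mono)
      then show ?thesis
        using u by (simp add: powr_half_sqrt)
    qed
    finally have "g (x / 2) * (2 * u) powr \<beta> \<le> g (x / 2) * u"
      using g_nonneg[of "x / 2"] assms by (intro mult_left_mono) auto
    then show ?thesis
      using u by (simp add: divide_le_eq)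
  qed
  finally show ?thesis .
qed

end

locale weibull_type_tail = sublinear_exponent +
  fixes T :: "real \<Rightarrow> real" and \<kappa> :: real
  assumes \<kappa>_pos: "\<kappa> > 0"
    and T_nonneg: "\<And>x. 0 \<le> T x"
    and T_asymp: "T \<sim>[at_top] (\<lambda>x. x powr (-\<kappa>) * exp (- g x))"
begin

definition \<phi> :: "real \<Rightarrow> real" where
  "\<phi> x = x powr (-\<kappa>) * exp (- g x)"

lemma \<phi>_pos: "x > 0 \<Longrightarrow> \<phi> x > 0"
  by (simp add: \<phi>_def)

lemma T_over_\<phi>_tendsto: "((\<lambda>x. T x / \<phi> x) \<longlongrightarrow> 1) at_top"
proof -
  have "((\<lambda>x. if T x = 0 \<and> \<phi> x = 0 then 1 else T x / \<phi> x) \<longlongrightarrow> 1) at_top"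
    using asymp_equivD[OF T_asymp] unfolding \<phi>_def[abs_def] .
  moreover have "\<forall>\<^sub>F x in at_top. (if T x = 0 \<and> \<phi> x = 0 then 1 else T x / \<phi> x) = T x / \<phi> x"
    using eventually_gt_at_top[of 0] by eventually_elim (auto dest: \<phi>_pos)
  ultimately show ?thesis
    by (rule Lim_transform_eventually)
qed

lemma T_\<phi>_bounds: "\<exists>x0\<ge>1. \<forall>x\<ge>x0. \<phi> x / 2 \<le> T x \<and> T x \<le> 2 * \<phi> x"
proof -
  have "\<forall>\<^sub>F x in at_top. 1 / 2 < T x / \<phi> x"
    by (rule order_tendstoD(1)[OF T_over_\<phi>_tendsto]) simp
  moreover have "\<forall>\<^sub>F x in at_top. T x / \<phi> x < 2"
    by (rule order_tendstoD(2)[OF T_over_\<phi>_tendsto]) simp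
  ultimately have "\<forall>\<^sub>F x in at_top. x \<ge> 1 \<and> \<phi> x / 2 \<le> T x \<and> T x \<le> 2 * \<phi> x"
    using eventually_ge_at_top[of 1]
    by eventually_elim (use \<phi>_pos in \<open>auto simp: field_simps\<close>)
  then obtain N where "\<forall>x\<ge>N. x \<ge> 1 \<and> \<phi> x / 2 \<le> T x \<and> T x \<le> 2 * \<phi> x"
    by (auto simp: eventually_at_top_linorder)
  then show ?thesis
    by (intro exI[of _ "max N 1"]) auto
qed

lemma T_pos: "\<forall>\<^sub>F v in at_top. T v > 0"
proof -
  obtain x0 where x0: "\<forall>x\<ge>x0. \<phi> x / 2 \<le> T x" "x0 \<ge> 1"
    using T_\<phi>_bounds by blast
  show ?thesis
    using eventually_ge_at_top[of x0]
  proof eventually_elim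
    case (elim v)
    then have "\<phi> v > 0"
      using x0(2) \<phi>_pos by simp
    with x0(1) elim show ?case
      by (metis half_gt_zero order_less_le_trans)
  qed
qed

lemma T_pair_le:
  obtains C x0 where "C > 0" "x0 \<ge> 1"
    "\<And>x v. x0 \<le> x / 2 \<Longrightarrow> 2 * x \<le> v \<Longrightarrow> T (x / 2) * T (v - x) \<le> C * x powr (-\<kappa>) * T v"
proof -
  obtain x0 where x0: "x0 \<ge> 1" "\<And>x. x \<ge> x0 \<Longrightarrow> \<phi> x / 2 \<le> T x \<and> T x \<le> 2 * \<phi> x"
    using T_\<phi>_bounds by blast
  have "T (x / 2) * T (v - x) \<le> 8 * (2 powr \<kappa>)\<^sup>2 * x powr (-\<kappa>) * T v"
    if x: "x0 \<le> x / 2" "2 * x \<le> v" for x v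
  proof -
    have pos: "0 < x" "v - x \<ge> v / 2" "v - x \<ge> x0" "v \<ge> x0"
      using x x0 by auto
    have "(v - x) powr (-\<kappa>) \<le> v powr (-\<kappa>) * 2 powr \<kappa>"
      using powr_mono2'[of "-\<kappa>" "v / 2" "v - x"] powr_neg_divide_power_2[where v = v and m = 1] pos \<kappa>_pos
      by simp
    then have "(x / 2) powr (-\<kappa>) * (v - x) powr (-\<kappa>) \<le> (x powr (-\<kappa>) * 2 powr \<kappa>) * (v powr (-\<kappa>) * 2 powr \<kappa>)"
      using powr_neg_divide_power_2[where v = x and m = 1] by (simp add: mult_left_mono)
    moreover have "exp (- g (x / 2)) * exp (- g (v - x)) \<le> exp (- g v)"
      using g_diff_le[of x v] pos x by (simp add: exp_add[symmetric])
    ultimately have "(x / 2) powr (-\<kappa>) * (v - x) powr (-\<kappa>) * (exp (- g (x / 2)) * exp (- g (v - x)))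
        \<le> (x powr (-\<kappa>) * 2 powr \<kappa>) * (v powr (-\<kappa>) * 2 powr \<kappa>) * exp (- g v)"
      by (rule mult_mono) simp_all
    then have "\<phi> (x / 2) * \<phi> (v - x) \<le> (x powr (-\<kappa>) * 2 powr \<kappa>) * (v powr (-\<kappa>) * 2 powr \<kappa>) * exp (- g v)"
      by (simp add: \<phi>_def mult_ac)
    also have "\<dots> = (2 powr \<kappa>)\<^sup>2 * x powr (-\<kappa>) * \<phi> v"
      by (simp add: \<phi>_def power2_eq_square)
    finally have "\<phi> (x / 2) * \<phi> (v - x) \<le> (2 powr \<kappa>)\<^sup>2 * x powr (-\<kappa>) * \<phi> v" .
    moreover have "T (x / 2) * T (v - x) \<le> (2 * \<phi> (x / 2)) * (2 * \<phi> (v - x))"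
      using x0(2)[of "x / 2"] x0(2)[of "v - x"] x pos T_nonneg by (intro mult_mono) auto
    moreover have "\<phi> v \<le> 2 * T v"
      using x0(2)[of v] pos by auto
    ultimately have "T (x / 2) * T (v - x) \<le> 4 * ((2 powr \<kappa>)\<^sup>2 * x powr (-\<kappa>) * \<phi> v)"
      by linarith
    also have "\<dots> \<le> 4 * ((2 powr \<kappa>)\<^sup>2 * x powr (-\<kappa>) * (2 * T v))"
      using \<open>\<phi> v \<le> 2 * T v\<close> by (intro mult_left_mono) auto
    finally show ?thesis
      by (simp add: mult_ac)
  qed
  then show thesis
    using x0(1) by (intro that[of "8 * (2 powr \<kappa>)\<^sup>2" x0]) auto
qed

lemma dyadic_pairs_sum_le:
  obtains C x0 where "C > 0" "x0 \<ge> 1"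
    "\<And>v hv N. 2 * x0 \<le> hv \<Longrightarrow> hv < v / 2 \<Longrightarrow> (\<And>j. j < N \<Longrightarrow> hv < v / 2 ^ (j + 1)) \<Longrightarrow>
       (\<Sum>j<N. T (v / 2 ^ (j + 2)) * T (v - v / 2 ^ (j + 1))) \<le> C * hv powr (-\<kappa>) * T v"
proof -
  obtain C x0 where C: "C > 0" "x0 \<ge> 1"
    and pair: "\<And>x v. x0 \<le> x / 2 \<Longrightarrow> 2 * x \<le> v \<Longrightarrow> T (x / 2) * T (v - x) \<le> C * x powr (-\<kappa>) * T v"
    using T_pair_le by blast
  define r where "r = 2 powr \<kappa> / (2 powr \<kappa> - 1)"
  have r: "r > 0"
    using \<kappa>_pos by (simp add: r_def)
  have "(\<Sum>j<N. T (v / 2 ^ (j + 2)) * T (v - v / 2 ^ (j + 1))) \<le> C * r * hv powr (-\<kappa>) * T v"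
    if hv: "2 * x0 \<le> hv" "hv < v / 2" and N: "\<And>j. j < N \<Longrightarrow> hv < v / 2 ^ (j + 1)" for v hv N
  proof -
    have "hv \<le> v / 2 ^ N"
    proof (cases N)
      case (Suc M)
      with N[of M] show ?thesis
        by simp
    qed (use hv C in simp)
    then have "(v / 2 ^ N) powr (-\<kappa>) \<le> hv powr (-\<kappa>)"
      using hv C \<kappa>_pos by (intro powr_mono2') auto
    have "(\<Sum>j<N. T (v / 2 ^ (j + 2)) * T (v - v / 2 ^ (j + 1)))
        \<le> (\<Sum>j<N. C * (v / 2 ^ (j + 1)) powr (-\<kappa>) * T v)"
    proof (rule sum_mono)
      fix j assume "j \<in> {..<N}"
      define y where "y = v / 2 ^ (j + 1)"
      have "x0 \<le> y / 2"
        using N[of j] hv \<open>j \<in> {..<N}\<close> unfolding y_def by simp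
      moreover have "2 * y \<le> v"
        using hv C divide_left_mono[of 2 "2 ^ (j + 1)" v] unfolding y_def by auto
      moreover have "y / 2 = v / 2 ^ (j + 2)"
        by (simp add: y_def)
      ultimately show "T (v / 2 ^ (j + 2)) * T (v - v / 2 ^ (j + 1)) \<le> C * (v / 2 ^ (j + 1)) powr (-\<kappa>) * T v"
        using pair[of y v] unfolding y_def by simp
    qed
    also have "\<dots> = C * T v * (\<Sum>j<N. (v / 2 ^ (j + 1)) powr (-\<kappa>))"
      by (simp add: sum_distrib_left mult_ac)
    also have "\<dots> \<le> C * T v * ((v / 2 ^ N) powr (-\<kappa>) * r)"
      using sum_dyadic_powr_le[OF \<kappa>_pos, of v N] C T_nonneg[of v]
      unfolding r_def by (intro mult_left_mono) auto
    also have "\<dots> \<le> C * T v * (hv powr (-\<kappa>) * r)"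
      using \<open>(v / 2 ^ N) powr (-\<kappa>) \<le> hv powr (-\<kappa>)\<close> C r T_nonneg[of v]
      by (intro mult_left_mono mult_right_mono) auto
    finally show ?thesis
      by (simp add: mult_ac)
  qed
  with C r show thesis
    by (intro that[of "C * r" x0]) auto
qed

text \<open>Any exponent in \<open>(0, 1 - \<beta>)\<close> would do: \<open>g\<close> then varies by \<open>o(1)\<close> on \<open>[v - h v, v]\<close>.\<close>

definition h :: "real \<Rightarrow> real" where
  "h v = v powr ((1 - \<beta>) / 2)"

lemma h_nonneg: "0 \<le> h v"
  by (simp add: h_def)

lemma h_tendsto: "filterlim h at_top at_top"
  unfolding h_def using \<beta> by real_asymp

lemma h_less_half: "\<forall>\<^sub>F v in at_top. h v < v / 2"
  unfolding h_def using \<beta> by real_asymp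

lemma v_minus_h_tendsto: "filterlim (\<lambda>v. v - h v) at_top at_top"
  unfolding h_def using \<beta> by real_asymp

lemma g_diff_h_tendsto: "((\<lambda>v. g v - g (v - h v)) \<longlongrightarrow> 0) at_top"
proof (rule tendsto_sandwich[of "\<lambda>_. 0" _ _ "\<lambda>v. 2 * g 1 * (v powr \<beta> * h v / v)"])
  show "\<forall>\<^sub>F v in at_top. 0 \<le> g v - g (v - h v)"
    using eventually_ge_at_top[of 2] h_less_half
    by eventually_elim (use h_nonneg in \<open>auto intro: g_le\<close>)
  show "\<forall>\<^sub>F v in at_top. g v - g (v - h v) \<le> 2 * g 1 * (v powr \<beta> * h v / v)"
    using eventually_ge_at_top[of 2] h_less_half
  proof eventually_elim
    case (elim v)
    define a where "a = v - h v"
    have a: "v / 2 \<le> a" "0 < a" "a \<le> v"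
      using elim h_nonneg[of v] by (auto simp: a_def)
    have "g v \<le> g a * (v / a) powr \<beta>"
      using a by (intro g_le_scaled) auto
    also have "\<dots> \<le> g a * (v / a) powr 1"
      using a \<beta> g_nonneg[of a] by (intro mult_left_mono powr_mono) auto
    also have "\<dots> = g a + g a * (h v / a)"
      using a by (simp add: a_def field_simps)
    finally have "g v - g a \<le> g a * (h v / a)"
      by simp
    also have "\<dots> \<le> g v * (2 * h v / v)"
    proof (rule mult_mono)
      have "v * h v \<le> (a * 2) * h v"
        using a h_nonneg[of v] by (intro mult_right_mono) auto
      then show "h v / a \<le> 2 * h v / v"
        using a elim by (simp add: field_simps)
    qed (use a elim g_nonneg[of a] g_le[of a v] h_nonneg[of v] in auto)
    also have "\<dots> \<le> g 1 * v powr \<beta> * (2 * h v / v)"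
      using elim g_le_powr[of v] h_nonneg[of v] by (intro mult_right_mono) auto
    finally show ?case
      by (simp add: a_def mult_ac)
  qed
  define \<gamma> where "\<gamma> = (1 - \<beta>) / 2"
  have "\<beta> + \<gamma> < 1"
    using \<beta> by (simp add: \<gamma>_def field_simps)
  then show "((\<lambda>v. 2 * g 1 * (v powr \<beta> * h v / v)) \<longlongrightarrow> 0) at_top"
    unfolding h_def \<gamma>_def[symmetric] by real_asymp
qed simp

lemma T_h_insensitive:
  assumes "\<epsilon> > 0"
  shows "\<forall>\<^sub>F v in at_top. T (v - h v) \<le> (1 + \<epsilon>) * T v"
proof -
  define \<rho> where "\<rho> x = T x / \<phi> x" for x
  have "((\<lambda>v. \<rho> (v - h v) / \<rho> v * ((v / (v - h v)) powr \<kappa> * exp (g v - g (v - h v))))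
          \<longlongrightarrow> 1 / 1 * (1 * exp 0)) at_top"
  proof (intro tendsto_intros)
    show "((\<lambda>v. \<rho> (v - h v)) \<longlongrightarrow> 1) at_top"
      unfolding \<rho>_def using filterlim_compose[OF T_over_\<phi>_tendsto v_minus_h_tendsto] by simp
    show "(\<rho> \<longlongrightarrow> 1) at_top"
      unfolding \<rho>_def by (rule T_over_\<phi>_tendsto)
    show "((\<lambda>v. (v / (v - h v)) powr \<kappa>) \<longlongrightarrow> 1) at_top"
      unfolding h_def using \<beta> \<kappa>_pos by real_asymp
  qed (use g_diff_h_tendsto in simp_all)
  moreover have "\<forall>\<^sub>F v in at_top.
      \<rho> (v - h v) / \<rho> v * ((v / (v - h v)) powr \<kappa> * exp (g v - g (v - h v))) = T (v - h v) / T v"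
    using eventually_ge_at_top[of 2] h_less_half
  proof eventually_elim
    case (elim v)
    then have "0 < v - h v" "0 < v"
      by auto
    then show ?case
      using \<phi>_pos[of v] \<phi>_pos[of "v - h v"]
      by (simp add: \<rho>_def \<phi>_def powr_minus powr_divide exp_diff exp_minus field_simps)
  qed
  ultimately have "((\<lambda>v. T (v - h v) / T v) \<longlongrightarrow> 1) at_top"
    by (auto intro: Lim_transform_eventually)
  then show ?thesis
    using assms by (intro eventually_le_of_ratio_less[OF _ _ T_pos]) auto
qed

lemma two_big_jumps_negligible_h: "two_big_jumps_negligible T h"
  unfolding two_big_jumps_negligible_def
proof (intro allI impI)
  fix \<eta> t0 :: real assume "\<eta> > 0"
  obtain C x0 where C: "C > 0" "x0 \<ge> 1" and sum_le:
    "\<And>v hv N. 2 * x0 \<le> hv \<Longrightarrow> hv < v / 2 \<Longrightarrow> (\<And>j. j < N \<Longrightarrow> hv < v / 2 ^ (j + 1)) \<Longrightarrow>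
       (\<Sum>j<N. T (v / 2 ^ (j + 2)) * T (v - v / 2 ^ (j + 1))) \<le> C * hv powr (-\<kappa>) * T v"
    using dyadic_pairs_sum_le by blast
  have "((\<lambda>v. 2 * C * h v powr (-\<kappa>)) \<longlongrightarrow> 2 * C * 0) at_top"
    using \<kappa>_pos by (intro tendsto_intros tendsto_neg_powr h_tendsto) simp
  then have "\<forall>\<^sub>F v in at_top. 2 * C * h v powr (-\<kappa>) < \<eta>"
    using \<open>\<eta> > 0\<close> by (intro order_tendstoD(2)) auto
  moreover have "\<forall>\<^sub>F v in at_top. max (2 * x0) (2 * t0) \<le> h v"
    using h_tendsto by (simp only: filterlim_at_top)
  ultimately show "\<forall>\<^sub>F v in at_top. \<exists>Q. finite Q \<and> (\<forall>q\<in>Q. t0 \<le> fst q \<and> t0 \<le> snd q) \<and>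
        (\<forall>w z. h v < w \<and> h v < z \<and> v < w + z \<longrightarrow> (\<exists>q\<in>Q. fst q < w \<and> snd q < z)) \<and>
        (\<Sum>q\<in>Q. T (fst q) * T (snd q)) \<le> \<eta> * T v"
    using h_less_half
  proof eventually_elim
    case (elim v)
    have hv: "0 < h v" "2 * x0 \<le> h v" "2 * t0 \<le> h v" "h v < v / 2"
      using elim C by auto
    obtain N where N: "\<And>j. j < N \<Longrightarrow> h v < v / 2 ^ (j + 1)" "v / 2 ^ (N + 1) \<le> h v"
      using dyadic_index_exists[OF hv(1), of v] by blast
    define a where "a j = (v / 2 ^ (j + 2), v - v / 2 ^ (j + 1))" for j
    define Q where "Q = a ` {..<N} \<union> (\<lambda>j. prod.swap (a j)) ` {..<N}"
    have "t0 \<le> v / 2 ^ (j + 2) \<and> t0 \<le> v - v / 2 ^ (j + 1)" if "j < N" for j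
      using N(1)[OF that] hv divide_left_mono[of 2 "2 ^ (j + 1)" v] by auto
    then have "\<forall>q\<in>Q. t0 \<le> fst q \<and> t0 \<le> snd q"
      by (auto simp: Q_def a_def)
    moreover have "\<forall>w z. h v < w \<and> h v < z \<and> v < w + z \<longrightarrow> (\<exists>q\<in>Q. fst q < w \<and> snd q < z)"
      using dyadic_cover[OF hv(1) hv(4) _ _ _ N] by (force simp: Q_def a_def)
    moreover have "(\<Sum>q\<in>Q. T (fst q) * T (snd q)) \<le> \<eta> * T v"
    proof -
      have "(\<Sum>q\<in>Q. T (fst q) * T (snd q)) \<le> 2 * (\<Sum>j<N. T (v / 2 ^ (j + 2)) * T (v - v / 2 ^ (j + 1)))"
        using sum_Un_image_le[of "{..<N}" "\<lambda>q. T (fst q) * T (snd q)" a "\<lambda>j. prod.swap (a j)"] T_nonneg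
        by (simp add: Q_def a_def mult.commute)
      also have "\<dots> \<le> 2 * C * h v powr (-\<kappa>) * T v"
        using sum_le[of "h v" v N, OF hv(2,4) N(1)] by (simp add: mult_ac)
      also have "\<dots> \<le> \<eta> * T v"
        using elim T_nonneg[of v] by (intro mult_right_mono) auto
      finally show ?thesis .
    qed
    ultimately show ?case
      by (intro exI[of _ Q]) (simp add: Q_def)
  qed
qed

lemma one_big_jump_tail_T: "one_big_jump_tail T"
  unfolding one_big_jump_tail_def
proof (intro conjI allI impI T_pos)
  fix \<epsilon> :: real assume "\<epsilon> > 0"
  have "\<forall>\<^sub>F v in at_top. h v \<le> v / 2"
    using h_less_half by eventually_elim simp
  with h_tendsto T_h_insensitive[OF \<open>\<epsilon> > 0\<close>] two_big_jumps_negligible_h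
  show "\<exists>h. filterlim h at_top at_top \<and> (\<forall>\<^sub>F v in at_top. h v \<le> v / 2) \<and>
      (\<forall>\<^sub>F v in at_top. T (v - h v) \<le> (1 + \<epsilon>) * T v) \<and> two_big_jumps_negligible T h"
    by blast
qed

end

theorem mainTheorem3:
  fixes M :: "'a measure" and X :: "nat \<Rightarrow> 'a \<Rightarrow> real" and a :: real and k :: nat
  assumes "prob_space M"
    and rv: "\<And>i. i \<ge> 1 \<Longrightarrow> X i \<in> borel_measurable M"
    and indep: "prob_space.indep_vars M (\<lambda>_. borel) X {1..}"
    and ident: "\<And>i. i \<ge> 1 \<Longrightarrow> distr M borel (X i) = distr M borel (X 1)"
    and "a > 0"
    and "integrable M (X 1)"
    and "prob_space.expectation M (X 1) = - a"
    and tail: "(\<exists>\<alpha> L. \<alpha> > 1 \<and> slowly_varying L \<and>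
                 (\<forall>x>0. measure M {\<omega>\<in>space M. X 1 \<omega> > x} = x powr (-\<alpha>) * L x))
             \<or> (\<exists>\<kappa> \<beta> g g'. 0 < \<beta> \<and> \<beta> < 1/2 \<and>
                 mono_on {0<..} g \<and>
                 (\<forall>x>0. (g has_real_derivative g' x) (at x)) \<and> continuous_on {0<..} g' \<and>
                 antimono_on {0<..} (\<lambda>x. g x / x powr \<beta>) \<and>
                 ((\<lambda>x. measure M {\<omega>\<in>space M. X 1 \<omega> > x}) \<sim>[at_top]
                    (\<lambda>x. x powr (-\<kappa>) * exp (- g x))) \<and>
                 integrable M (\<lambda>\<omega>. \<bar>X 1 \<omega>\<bar> powr \<kappa>) \<and> \<kappa> > 1 / (1 - \<beta>))"
    and "k \<ge> 1"
  shows "\<forall>\<epsilon>>0. \<forall>\<^sub>F y in at_top. \<forall>v>y.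
           \<bar>measure M {\<omega>\<in>space M. rw_S X k \<omega> > v \<and> rw_sigma X y \<omega> = enat k}
              / measure M {\<omega>\<in>space M. X 1 \<omega> > v}
            - measure M {\<omega>\<in>space M. rw_tau X \<omega> > enat (k - 1)}\<bar> \<le> \<epsilon>"
proof -
  interpret iid_walk M X
    using assms(1) rv indep ident by (intro iid_walk.intro iid_walk_axioms.intro)
  have Fbar_eq: "Fbar = (\<lambda>x. measure M {\<omega>\<in>space M. X 1 \<omega> > x})"
    by (simp add: Fbar_def[abs_def])
  have "one_big_jump_tail Fbar"
    using tail
  proof (elim disjE exE conjE)
    fix \<alpha> L assume "slowly_varying L" "\<forall>x>0. measure M {\<omega>\<in>space M. X 1 \<omega> > x} = x powr (-\<alpha>) * L x"
    then show ?thesis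
      by (intro regularly_varying_one_big_jump_tail[OF Fbar_tendsto_0 \<open>slowly_varying L\<close>, of \<alpha>])
         (simp add: Fbar_eq)
  next
    fix \<kappa> \<beta> g g' assume "0 < \<beta>" "\<beta> < 1 / 2" "mono_on {0<..} g"
      "antimono_on {0<..} (\<lambda>x. g x / x powr \<beta>)" "\<kappa> > 1 / (1 - \<beta>)"
      "(\<lambda>x. measure M {\<omega>\<in>space M. X 1 \<omega> > x}) \<sim>[at_top] (\<lambda>x. x powr (-\<kappa>) * exp (- g x))"
    then interpret weibull_type_tail g \<beta> Fbar \<kappa>
      by unfold_locales (auto simp: Fbar_eq intro: order.strict_trans[of 0 "1 / (1 - \<beta>)"])
    show ?thesis
      by (rule one_big_jump_tail_T)
  qed
  then interpret big_jump_walk M X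
    by unfold_locales
  obtain n where "k = Suc n"
    using \<open>k \<ge> 1\<close> by (cases k) auto
  then show ?thesis
    using first_passage_ratio[of _ n] by (simp add: Fbar_eq)
qed

end
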